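(* Let $k>500$, $\ln^3k/\sqrt k<\delta<1/100$, $d=300\lceil\ln k\rceil$, $\varepsilon=50\delta/\lceil\ln k\rceil$, and let $c^1,\dots,c^k$ be sampled independently and uniformly from the grid $G$, with data set $X$ as in the context. Then with probability at least $1-1/k$ the following holds: for every path $\pi$ of length at most $\log_2k/4$, either (a) $|F_{u(\pi)}|\le\sqrt k$, or (b) every threshold cut $(i,\xi)$ that separates at least two data points of $X\cap u(\pi)$ damages at least $\varepsilon|F_{u(\pi)}|/2$ centers of $F_{u(\pi)}$.
   Context: $G$ is the set of points of $[0,1]^d$ all of whose coordinates are nonnegative integer multiples of $\varepsilon$; $\mathbf{1}=(1,\dots,1)\in\mathbb{R}^d$. The data set (multiset) $X$ consists, for each $i$, of $k^2\lceil\ln^3k\rceil$ copies of $c^i$ together with the two points $c^i+\varepsilon\mathbf{1}$ and $c^i-\varepsilon\mathbf{1}$. A path $\pi$ is a finite sequence of triples $(i_j,\xi_j,\lambda_j)$ with $i_j\in\{1,\dots,d\}$, $\xi_j\in\mathbb{R}$, $\lambda_j\in\{\pm1\}$; its length is the number of triples; $u(\pi)$ is the set of $y\in\mathbb{R}^d$ such that for each $j$, $y_{i_j}\le\xi_j$ if $\lambda_j=-1$ and $y_{i_j}>\xi_j$ if $\lambda_j=+1$. A center $c^i\in u(\pi)$ is damaged in $u(\pi)$ if $c^i+\varepsilon\mathbf{1}\notin u(\pi)$ or $c^i-\varepsilon\mathbf{1}\notin u(\pi)$; $F_{u(\pi)}$ is the set (indexed by $i$) of centers $c^i\in u(\pi)$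 that are not damaged in $u(\pi)$. A threshold cut $(i,\xi)$ separates two points if exactly one of them satisfies $y_i\le\xi$; it damages a center $c$ if it separates $c$ from $c+\varepsilon\mathbf 1$ or from $c-\varepsilon\mathbf 1$. *)

theory Defs
  imports "HOL-Probability.Probability" "HOL-Library.Multiset"
begin

text \<open>Points of R^d are modelled as functions nat => real; only coordinates 0..d-1 matter
  (coordinate i of the paper corresponds to index i-1 here).\<close>

definition grid :: "nat \<Rightarrow> real \<Rightarrow> (nat \<Rightarrow> real) set" where
  "grid d eps = {y. (\<forall>i<d. (\<exists>j::nat. y i = real j * eps) \<and> 0 \<le> y i \<and> y i \<le> 1)
                    \<and> (\<forall>i. d \<le> i \<longrightarrow> y i = 0)}"

definition shift :: "nat \<Rightarrow> real \<Rightarrow> real \<Rightarrow> (nat \<Rightarrow> real) \<Rightarrow> (nat \<Rightarrow> real)" where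
  "shift d eps s c = (\<lambda>i. if i < d then c i + s * eps else c i)"

type_synonym path = "(nat \<times> real \<times> int) list"

definition valid_path :: "nat \<Rightarrow> path \<Rightarrow> bool" where
  "valid_path d \<pi> = (\<forall>(i, \<xi>, l) \<in> set \<pi>. i < d \<and> (l = -1 \<or> l = 1))"

definition cell :: "path \<Rightarrow> (nat \<Rightarrow> real) set" where
  "cell \<pi> = {y. \<forall>(i, \<xi>, l) \<in> set \<pi>. (l = -1 \<longrightarrow> y i \<le> \<xi>) \<and> (l = 1 \<longrightarrow> y i > \<xi>)}"

definition separates :: "nat \<Rightarrow> real \<Rightarrow> (nat \<Rightarrow> real) \<Rightarrow> (nat \<Rightarrow> real) \<Rightarrow> bool" where
  "separates i \<xi> x y = ((x i \<le> \<xi>) \<noteq> (y i \<le> \<xi>))"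

definition damages :: "nat \<Rightarrow> real \<Rightarrow> nat \<Rightarrow> real \<Rightarrow> (nat \<Rightarrow> real) \<Rightarrow> bool" where
  "damages d eps i \<xi> c = (separates i \<xi> c (shift d eps 1 c) \<or> separates i \<xi> c (shift d eps (-1) c))"

definition damaged_in :: "nat \<Rightarrow> real \<Rightarrow> (nat \<Rightarrow> real) set \<Rightarrow> (nat \<Rightarrow> real) \<Rightarrow> bool" where
  "damaged_in d eps U c = (shift d eps 1 c \<notin> U \<or> shift d eps (-1) c \<notin> U)"

definition F_idx :: "nat \<Rightarrow> real \<Rightarrow> nat \<Rightarrow> (nat \<Rightarrow> nat \<Rightarrow> real) \<Rightarrow> (nat \<Rightarrow> real) set \<Rightarrow> nat set" where
  "F_idx d eps k c U = {j. j < k \<and> c j \<in> U \<and> \<not> damaged_in d eps U (c j)}"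

definition dataset :: "nat \<Rightarrow> real \<Rightarrow> nat \<Rightarrow> (nat \<Rightarrow> nat \<Rightarrow> real) \<Rightarrow> (nat \<Rightarrow> real) multiset" where
  "dataset d eps k c = (\<Sum>j<k. replicate_mset (k^2 * nat \<lceil>(ln (real k))^3\<rceil>) (c j)
                             + {# shift d eps 1 (c j), shift d eps (-1) (c j) #})"

end

(*
  Fix a path pi and a coordinate i, and let T be the set of centers that are undamaged with
  respect to the cuts of pi on the coordinates other than i.  If a cut (i, xi) separates two data
  points of the cell and some center is undamaged in the cell, then for a suitable value w next to
  xi every center of T with i-th coordinate w * eps lies, together with its two shifts, between a
  data point and a shift of that center; so it is undamaged in the cell and damaged by the cut.
  Membership in T ignores the i-th coordinate, which is uniform on N + 1 values independently of
  the rest, so by a Chernoff bound each such slice of T contains at least a 0.55 / (N + 1)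
  fraction of T whenever |T| > sqrt k, except with probability exp (-sqrt k / (10 (N + 1))).
  Since eps (N + 1) <= 1.1 this gives the eps |F| / 2 damaged centers.  Rounding the thresholds
  of pi to multiples of eps does not change the cell on the grid points and their shifts, so a
  union bound over the k^O(log k) rounded paths, coordinates and values finishes the proof.
*)
theory Submission
  imports Defs
begin


section \<open>Counting on finite product sets\<close>

lemma card_PiE_prod_ge_le:
  fixes w :: "'a \<Rightarrow> real"
  assumes I: "finite I" and G: "finite G" and w_nonneg: "\<And>x. x \<in> G \<Longrightarrow> 0 \<le> w x"
    and w_sum: "(\<Sum>x\<in>G. w x) = card G" and t: "0 < t"
  shows "t * card {c \<in> PiE I (\<lambda>_. G). t \<le> (\<Prod>j\<in>I. w (c j))} \<le> card (PiE I (\<lambda>_. G))"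
proof -
  let ?S = "PiE I (\<lambda>_. G)"
  let ?Z = "\<lambda>c. \<Prod>j\<in>I. w (c j)"
  have finS: "finite ?S" using I G by (intro finite_PiE) auto
  have "t * card {c \<in> ?S. t \<le> ?Z c} = (\<Sum>c\<in>{c \<in> ?S. t \<le> ?Z c}. t)" by simp
  also have "\<dots> \<le> (\<Sum>c\<in>{c \<in> ?S. t \<le> ?Z c}. ?Z c)" by (rule sum_mono) simp
  also have "\<dots> \<le> (\<Sum>c\<in>?S. ?Z c)"
    by (rule sum_mono2[OF finS]) (auto intro!: prod_nonneg w_nonneg dest: PiE_mem)
  also have "\<dots> = (\<Prod>j\<in>I. \<Sum>x\<in>G. w x)" by (rule prod_sum_PiE[symmetric]) (use I G in auto)
  also have "\<dots> = card ?S" using I by (simp add: w_sum card_PiE)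
  finally show ?thesis .
qed

text \<open>A Chernoff-type lower tail bound follows from Markov's inequality for the product of the
  following weights, which average to 1 on \<open>G\<close> when \<open>B\<close> has density \<open>q\<close> in \<open>A\<close>.\<close>

definition tail_weight :: "'a set \<Rightarrow> 'a set \<Rightarrow> real \<Rightarrow> 'a \<Rightarrow> real" where
  "tail_weight A B q x = (if x \<in> B then 1/2 else 1) * (if x \<in> A then 1 / (1 - q/2) else 1)"

lemma tail_weight_nonneg: "q < 2 \<Longrightarrow> 0 \<le> tail_weight A B q x"
  by (simp add: tail_weight_def)

lemma sum_tail_weight:
  fixes q :: real
  assumes G: "finite G" and BA: "B \<subseteq> A" and q: "card (G \<inter> B) = q * card (G \<inter> A)" "q < 2"
  shows "(\<Sum>x\<in>G. tail_weight A B q x) = card G"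
proof -
  have "(\<Sum>x\<in>G \<inter> A. if x \<in> B then 1/2 else 1::real) = (\<Sum>x\<in>G \<inter> A. 1 - of_bool (x \<in> B) / 2)"
    by (rule sum.cong) auto
  also have "\<dots> = card (G \<inter> A) - card (G \<inter> B) / 2"
    using G BA by (simp add: sum_subtractf sum_divide_distrib[symmetric] Int_assoc Int_absorb1)
  also have "\<dots> = (1 - q/2) * card (G \<inter> A)" using q(1) by (simp add: algebra_simps)
  finally have "(\<Sum>x\<in>G \<inter> A. tail_weight A B q x) = card (G \<inter> A)"
    using q(2) by (simp add: tail_weight_def sum_divide_distrib[symmetric])
  moreover have "(\<Sum>x\<in>G - A. tail_weight A B q x) = (\<Sum>x\<in>G - A. 1)"
    using BA by (intro sum.cong) (auto simp: tail_weight_def)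
  moreover have "(\<Sum>x\<in>G. tail_weight A B q x) = (\<Sum>x\<in>G \<inter> A. tail_weight A B q x) + (\<Sum>x\<in>G - A. tail_weight A B q x)"
    using G by (rule sum.Int_Diff)
  moreover have "card G = card (G \<inter> A) + card (G - A)"
    using G by (rule card_Int_Diff)
  ultimately show ?thesis by simp
qed

lemma prod_tail_weight_ge:
  fixes q s :: real
  assumes I: "finite I" and q: "0 < q" "q < 2"
    and A: "s < card {j\<in>I. c j \<in> A}" and B: "card {j\<in>I. c j \<in> B} < 11/20 * q * card {j\<in>I. c j \<in> A}"
  shows "exp (s * q / 10) \<le> (\<Prod>j\<in>I. tail_weight A B q (c j))"
proof -
  define nA nB where "nA = card {j\<in>I. c j \<in> A}" and "nB = card {j\<in>I. c j \<in> B}"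
  have half: "exp (- (25/36) * nB) \<le> (1/2) ^ nB"
  proof -
    have "exp (- (25/36)) \<le> exp (- ln (2::real))" using ln2_le_25_over_36 by simp
    hence "exp (- (25/36)) \<le> (1/2::real)" by (simp add: exp_minus)
    hence "exp (- (25/36)) ^ nB \<le> (1/2::real) ^ nB" by (intro power_mono) auto
    thus ?thesis by (simp add: exp_of_nat_mult[symmetric] mult.commute)
  qed
  have inverse: "exp (q/2 * nA) \<le> (1 / (1 - q/2)) ^ nA"
  proof -
    have "1 - q/2 \<le> exp (- (q/2))" using exp_ge_add_one_self[of "- (q/2)"] by simp
    hence "exp (q/2) \<le> 1 / (1 - q/2)" using q(2) by (simp add: exp_minus field_simps)
    hence "exp (q/2) ^ nA \<le> (1 / (1 - q/2)) ^ nA" by (intro power_mono) auto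
    thus ?thesis by (simp add: exp_of_nat_mult[symmetric] mult.commute)
  qed
  have "s * q < nA * q" using A q(1) unfolding nA_def by (rule mult_strict_right_mono)
  moreover have "0 \<le> nA * q" using q(1) by simp
  ultimately have "s * q / 10 \<le> - (25/36) * nB + q/2 * nA"
    using B unfolding nB_def[symmetric] nA_def[symmetric] by (simp add: field_simps)
  hence "exp (s * q / 10) \<le> exp (- (25/36) * nB) * exp (q/2 * nA)"
    by (simp add: mult_exp_exp)
  also have "\<dots> \<le> (1/2) ^ nB * (1 / (1 - q/2)) ^ nA"
    using half inverse by (intro mult_mono) auto
  also have "\<dots> = (\<Prod>j\<in>I. tail_weight A B q (c j))"
    using I by (simp add: tail_weight_def nA_def nB_def prod.distrib prod.If_cases Int_def)
  finally show ?thesis .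
qed

lemma card_PiE_lower_tail_le:
  fixes A B :: "'a set" and q s :: real
  assumes I: "finite I" and G: "finite G" and BA: "B \<subseteq> A"
    and q: "card (G \<inter> B) = q * card (G \<inter> A)" "0 < q" "q \<le> 1"
  shows "card {c \<in> PiE I (\<lambda>_. G). s < card {j\<in>I. c j \<in> A}
                  \<and> card {j\<in>I. c j \<in> B} < 11/20 * q * card {j\<in>I. c j \<in> A}}
           \<le> exp (- s * q / 10) * card (PiE I (\<lambda>_. G))"
    (is "real (card ?bad) \<le> _")
proof -
  let ?heavy = "{c \<in> PiE I (\<lambda>_. G). exp (s * q / 10) \<le> (\<Prod>j\<in>I. tail_weight A B q (c j))}"
  have "?bad \<subseteq> ?heavy" using prod_tail_weight_ge[OF I q(2)] q(3) by auto
  hence "card ?bad \<le> card ?heavy"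
    using finite_PiE[OF I, of "\<lambda>_. G"] G by (intro card_mono) auto
  hence "exp (s * q / 10) * card ?bad \<le> exp (s * q / 10) * card ?heavy" by simp
  also have "\<dots> \<le> card (PiE I (\<lambda>_. G))"
    using q(3) by (intro card_PiE_prod_ge_le[OF I G _ sum_tail_weight[OF G BA q(1)]] tail_weight_nonneg) auto
  finally have markov: "exp (s * q / 10) * card ?bad \<le> card (PiE I (\<lambda>_. G))" .
  have "card ?bad = exp (- s * q / 10) * (exp (s * q / 10) * card ?bad)"
    by (simp add: mult.assoc[symmetric] mult_exp_exp)
  also have "\<dots> \<le> exp (- s * q / 10) * card (PiE I (\<lambda>_. G))"
    using markov by (intro mult_left_mono) auto
  finally show ?thesis .
qed

lemma card_lists_length_le_bound:
  assumes A: "finite A" and a: "card A \<le> a" "1 \<le> a"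
  shows "card {xs. set xs \<subseteq> A \<and> length xs \<le> l} \<le> (l + 1) * a ^ l"
proof -
  have "card {xs. set xs \<subseteq> A \<and> length xs \<le> l} = (\<Sum>i\<le>l. card A ^ i)"
    by (rule card_lists_length_le[OF A])
  also have "\<dots> \<le> (\<Sum>i\<le>l. a ^ l)"
  proof (rule sum_mono)
    fix i assume "i \<in> {..l}"
    have "card A ^ i \<le> a ^ i" using a(1) by (rule power_mono) simp
    also have "\<dots> \<le> a ^ l" using a(2) \<open>i \<in> {..l}\<close> by (intro power_increasing) auto
    finally show "card A ^ i \<le> a ^ l" .
  qed
  finally show ?thesis by simp
qed

lemma card_UN_le_mult:
  fixes b :: real
  assumes "finite E" "\<And>e. e \<in> E \<Longrightarrow> real (card (B e)) \<le> b"
  shows "real (card (\<Union>e\<in>E. B e)) \<le> card E * b"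
proof -
  have "real (card (\<Union>e\<in>E. B e)) \<le> real (\<Sum>e\<in>E. card (B e))"
    by (rule of_nat_mono[OF card_UN_le[OF assms(1)]])
  also have "\<dots> = (\<Sum>e\<in>E. real (card (B e)))" by (rule of_nat_sum)
  also have "\<dots> \<le> card E * b" by (rule sum_bounded_above[OF assms(2)])
  finally show ?thesis .
qed

lemma prob_pmf_of_set_ge:
  fixes p :: real
  assumes S: "finite S" "S \<noteq> {}" and U: "U \<subseteq> S" "S - U \<subseteq> T" "real (card U) \<le> p * card S"
  shows "1 - p \<le> measure_pmf.prob (pmf_of_set S) T"
proof -
  have "card (S - U) \<le> card (S \<inter> T)" using S(1) U(2) by (intro card_mono) auto
  moreover have "card (S - U) = card S - card U"
    using S(1) U(1) by (simp add: card_Diff_subset finite_subset)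
  moreover have "card U \<le> card S" using S(1) U(1) by (rule card_mono)
  ultimately have "real (card S) - card U \<le> card (S \<inter> T)" by linarith
  moreover have "0 < real (card S)" using S by (simp add: card_gt_0_iff)
  ultimately have "1 - p \<le> card (S \<inter> T) / card S" using U(3) by (simp add: field_simps)
  thus ?thesis using S by (simp add: measure_pmf_of_set)
qed

section \<open>The grid\<close>

lemma grid_coord_mem:
  assumes "y \<in> grid d eps" "i < d" "eps > 0"
  shows "y i \<in> (\<lambda>j. real j * eps) ` {..nat \<lfloor>1/eps\<rfloor>}"
proof -
  from assms obtain j :: nat where j: "y i = real j * eps" "y i \<le> 1"
    unfolding grid_def by blast
  have "real j \<le> 1/eps" using j assms(3) by (simp add: field_simps)
  hence "j \<le> nat \<lfloor>1/eps\<rfloor>" by (simp add: le_nat_floor)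
  with j show ?thesis by blast
qed

lemma finite_grid:
  assumes "eps > 0"
  shows "finite (grid d eps)"
proof (rule finite_subset)
  let ?steps = "(\<lambda>j. real j * eps) ` {..nat \<lfloor>1/eps\<rfloor>}"
  show "grid d eps \<subseteq> (\<lambda>f i. if i < d then f i else 0) ` PiE {..<d} (\<lambda>_. ?steps)"
  proof
    fix y assume y: "y \<in> grid d eps"
    have "restrict y {..<d} \<in> PiE {..<d} (\<lambda>_. ?steps)"
      using grid_coord_mem[OF y _ assms] by simp
    moreover have "y = (\<lambda>i. if i < d then restrict y {..<d} i else 0)"
      using y by (auto simp: fun_eq_iff grid_def)
    ultimately show "y \<in> (\<lambda>f i. if i < d then f i else 0) ` PiE {..<d} (\<lambda>_. ?steps)"
      by blast
  qed
qed (auto intro!: finite_PiE)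

lemma fun_upd_in_grid:
  assumes "x \<in> grid d eps" "i < d" "w \<le> nat \<lfloor>1/eps\<rfloor>" "eps > 0"
  shows "x(i := real w * eps) \<in> grid d eps"
proof -
  have "0 \<le> \<lfloor>1/eps\<rfloor>" using assms(4) by simp
  hence "int w \<le> \<lfloor>1/eps\<rfloor>" using assms(3) by linarith
  hence "real w \<le> 1/eps" by (simp add: le_floor_iff)
  hence "real w * eps \<le> 1" using assms(4) by (simp add: field_simps)
  thus ?thesis using assms unfolding grid_def by auto
qed

lemma card_grid_slice_eq_zero_slice:
  assumes eps: "eps > 0" and i: "i < d" and w: "w \<le> nat \<lfloor>1/eps\<rfloor>"
    and A: "\<And>x r. x(i := r) \<in> A \<longleftrightarrow> x \<in> A"
  shows "card (grid d eps \<inter> A \<inter> {x. x i = real w * eps}) = card (grid d eps \<inter> A \<inter> {x. x i = 0})"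
proof (rule bij_betw_same_card)
  have upd0: "x(i := 0) \<in> grid d eps" if "x \<in> grid d eps" for x
    using fun_upd_in_grid[OF that i _ eps, of 0] by simp
  show "bij_betw (\<lambda>x. x(i := 0)) (grid d eps \<inter> A \<inter> {x. x i = real w * eps}) (grid d eps \<inter> A \<inter> {x. x i = 0})"
  proof (rule bij_betw_byWitness[where f'="\<lambda>x. x(i := real w * eps)"])
    show "\<forall>x\<in>grid d eps \<inter> A \<inter> {x. x i = real w * eps}. (x(i := 0))(i := real w * eps) = x"
      by auto
    show "\<forall>x\<in>grid d eps \<inter> A \<inter> {x. x i = 0}. (x(i := real w * eps))(i := 0) = x"
      by auto
    show "(\<lambda>x. x(i := 0)) ` (grid d eps \<inter> A \<inter> {x. x i = real w * eps}) \<subseteq> grid d eps \<inter> A \<inter> {x. x i = 0}"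
      using upd0 A by auto
    show "(\<lambda>x. x(i := real w * eps)) ` (grid d eps \<inter> A \<inter> {x. x i = 0}) \<subseteq> grid d eps \<inter> A \<inter> {x. x i = real w * eps}"
      using fun_upd_in_grid[OF _ i w eps] A by auto
  qed
qed

lemma card_grid_eq_mult_slice:
  assumes eps: "eps > 0" and i: "i < d" and v: "v \<le> nat \<lfloor>1/eps\<rfloor>"
    and A: "\<And>x r. x(i := r) \<in> A \<longleftrightarrow> x \<in> A"
  shows "card (grid d eps \<inter> A) = (nat \<lfloor>1/eps\<rfloor> + 1) * card (grid d eps \<inter> A \<inter> {x. x i = real v * eps})"
proof -
  let ?N = "nat \<lfloor>1/eps\<rfloor>"
  let ?slice = "\<lambda>w. grid d eps \<inter> A \<inter> {x. x i = real w * eps}"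
  have slices: "grid d eps \<inter> A = (\<Union>w\<in>{..?N}. ?slice w)"
  proof (intro equalityI subsetI)
    fix x assume x: "x \<in> grid d eps \<inter> A"
    then obtain w where "w \<le> ?N" "x i = real w * eps"
      using grid_coord_mem[of x d eps i] i eps by auto
    with x show "x \<in> (\<Union>w\<in>{..?N}. ?slice w)" by blast
  qed auto
  have "card (\<Union>w\<in>{..?N}. ?slice w) = (\<Sum>w\<in>{..?N}. card (?slice w))"
  proof (rule card_UN_disjoint)
    show "\<forall>w\<in>{..?N}. finite (?slice w)" using finite_grid[OF eps] by simp
    show "\<forall>w\<in>{..?N}. \<forall>w'\<in>{..?N}. w \<noteq> w' \<longrightarrow> ?slice w \<inter> ?slice w' = {}"
      using eps by auto
  qed simp
  also have "\<dots> = (\<Sum>w\<in>{..?N}. card (?slice v))"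
    using card_grid_slice_eq_zero_slice[OF eps i _ A] card_grid_slice_eq_zero_slice[OF eps i v A] by simp
  finally show ?thesis unfolding slices[symmetric] by simp
qed

section \<open>Cells and undamaged centers\<close>

definition without_coord :: "nat \<Rightarrow> path \<Rightarrow> path" where
  "without_coord i \<pi> = filter (\<lambda>t. fst t \<noteq> i) \<pi>"

definition undamaged_in :: "nat \<Rightarrow> real \<Rightarrow> (nat \<Rightarrow> real) set \<Rightarrow> (nat \<Rightarrow> real) set" where
  "undamaged_in d eps U = {x \<in> U. \<not> damaged_in d eps U x}"

lemma F_idx_eq: "F_idx d eps k c U = {j. j < k \<and> c j \<in> undamaged_in d eps U}"
  by (auto simp: F_idx_def undamaged_in_def)

lemma undamaged_in_mono: "U \<subseteq> V \<Longrightarrow> undamaged_in d eps U \<subseteq> undamaged_in d eps V"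
  by (auto simp: undamaged_in_def damaged_in_def)

lemma F_idx_mono: "U \<subseteq> V \<Longrightarrow> F_idx d eps k c U \<subseteq> F_idx d eps k c V"
  unfolding F_idx_eq using undamaged_in_mono[of U V d eps] by blast

lemma shift_zero [simp]: "shift d eps 0 x = x"
  unfolding shift_def by auto

lemma shift_coord: "i < d \<Longrightarrow> shift d eps s x i = x i + s * eps"
  by (simp add: shift_def)

lemma cell_antimono: "set \<pi>' \<subseteq> set \<pi> \<Longrightarrow> cell \<pi> \<subseteq> cell \<pi>'"
  by (auto simp: cell_def)

lemma cell_subset_without_coord: "cell \<pi> \<subseteq> cell (without_coord i \<pi>)"
  by (rule cell_antimono) (simp add: without_coord_def)

lemma mem_cell_without_coord_cong:
  assumes "\<And>j. j \<noteq> i \<Longrightarrow> y j = y' j"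
  shows "y \<in> cell (without_coord i \<pi>) \<longleftrightarrow> y' \<in> cell (without_coord i \<pi>)"
  using assms by (auto simp: cell_def without_coord_def)

lemma undamaged_in_without_coord_fun_upd:
  "x(i := r) \<in> undamaged_in d eps (cell (without_coord i \<pi>))
     \<longleftrightarrow> x \<in> undamaged_in d eps (cell (without_coord i \<pi>))"
proof -
  have "shift d eps s (x(i := r)) \<in> cell (without_coord i \<pi>) \<longleftrightarrow> shift d eps s x \<in> cell (without_coord i \<pi>)" for s
    by (rule mem_cell_without_coord_cong) (simp add: shift_def)
  moreover have "x(i := r) \<in> cell (without_coord i \<pi>) \<longleftrightarrow> x \<in> cell (without_coord i \<pi>)"
    by (rule mem_cell_without_coord_cong) simp
  ultimately show ?thesis by (simp add: undamaged_in_def damaged_in_def)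
qed

lemma cell_coord_convex:
  assumes u: "u \<in> cell \<pi>" and v: "v \<in> cell \<pi>" and z: "z \<in> cell (without_coord i \<pi>)"
    and "u i \<le> z i" "z i \<le> v i"
  shows "z \<in> cell \<pi>"
  unfolding cell_def
proof (clarify)
  fix i' \<xi> l assume t: "(i', \<xi>, l) \<in> set \<pi>"
  show "(l = -1 \<longrightarrow> z i' \<le> \<xi>) \<and> (l = 1 \<longrightarrow> \<xi> < z i')"
  proof (cases "i' = i")
    case True
    with t u v assms(4,5) show ?thesis by (force simp: cell_def)
  next
    case False
    with t z show ?thesis by (force simp: cell_def without_coord_def)
  qed
qed

lemma undamaged_in_cell_if_between:
  assumes z: "z \<in> undamaged_in d eps (cell (without_coord i \<pi>))" and i: "i < d"
    and u: "u \<in> cell \<pi>" "u i \<le> z i - eps" and v: "v \<in> cell \<pi>" "z i + eps \<le> v i"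
    and eps: "0 \<le> eps"
  shows "z \<in> undamaged_in d eps (cell \<pi>)"
proof -
  have "shift d eps s z \<in> cell \<pi>" if s: "s \<in> {-1, 0, 1}" for s
  proof (rule cell_coord_convex[OF u(1) v(1)])
    show "shift d eps s z \<in> cell (without_coord i \<pi>)"
      using z s by (auto simp: undamaged_in_def damaged_in_def)
    show "u i \<le> shift d eps s z i" "shift d eps s z i \<le> v i"
      using u(2) v(2) s eps by (auto simp: shift_coord[OF i])
  qed
  thus ?thesis by (force simp: undamaged_in_def damaged_in_def)
qed

lemma damages_if_straddles:
  assumes "i < d" "m * eps \<le> \<xi>" "\<xi> < (m + 1) * eps" "z i = m * eps \<or> z i = (m + 1) * eps"
  shows "damages d eps i \<xi> z"
  using assms by (auto simp: damages_def separates_def shift_coord algebra_simps)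

section \<open>Rounded paths\<close>

text \<open>Rounding a threshold down to \<open>eps\<close>-multiples and clamping it to \<open>[-2, N + 1]\<close> keeps every
  comparison with a point \<open>m * eps\<close>, \<open>-1 \<le> m \<le> N + 1\<close>; the lower clamp is \<open>-2\<close> rather than \<open>-1\<close>
  so that thresholds below \<open>-eps\<close> stay below it.\<close>

definition round_threshold :: "real \<Rightarrow> nat \<Rightarrow> real \<Rightarrow> real" where
  "round_threshold eps N \<xi> = real_of_int (max (-2) (min (int N + 1) \<lfloor>\<xi>/eps\<rfloor>)) * eps"

definition round_path :: "real \<Rightarrow> nat \<Rightarrow> path \<Rightarrow> path" where
  "round_path eps N \<pi> = map (\<lambda>(i, \<xi>, l). (i, round_threshold eps N \<xi>, l)) \<pi>"

definition near_grid :: "nat \<Rightarrow> real \<Rightarrow> nat \<Rightarrow> (nat \<Rightarrow> real) \<Rightarrow> bool" where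
  "near_grid d eps N y \<longleftrightarrow> (\<forall>i<d. \<exists>m::int. -1 \<le> m \<and> m \<le> int N + 1 \<and> y i = real_of_int m * eps)"

lemma le_round_threshold_iff:
  assumes eps: "eps > 0" and m: "-1 \<le> m" "m \<le> int N + 1"
  shows "real_of_int m * eps \<le> round_threshold eps N \<xi> \<longleftrightarrow> real_of_int m * eps \<le> \<xi>"
proof -
  have "real_of_int m * eps \<le> round_threshold eps N \<xi> \<longleftrightarrow> m \<le> max (-2) (min (int N + 1) \<lfloor>\<xi>/eps\<rfloor>)"
    unfolding round_threshold_def using eps by (simp del: of_int_max of_int_min)
  also have "\<dots> \<longleftrightarrow> m \<le> \<lfloor>\<xi>/eps\<rfloor>" using m by linarith
  also have "\<dots> \<longleftrightarrow> real_of_int m * eps \<le> \<xi>" using eps by (simp add: le_floor_iff field_simps)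
  finally show ?thesis .
qed

lemma mem_cell_round_path_iff:
  assumes eps: "eps > 0" and \<pi>: "valid_path d \<pi>" and y: "near_grid d eps N y"
  shows "y \<in> cell (round_path eps N \<pi>) \<longleftrightarrow> y \<in> cell \<pi>"
proof -
  have "y i \<le> round_threshold eps N \<xi> \<longleftrightarrow> y i \<le> \<xi>" if "(i, \<xi>, l) \<in> set \<pi>" for i \<xi> l
  proof -
    have "i < d" using \<pi> that by (auto simp: valid_path_def)
    then obtain m :: int where "-1 \<le> m" "m \<le> int N + 1" "y i = real_of_int m * eps"
      using y by (auto simp: near_grid_def)
    thus ?thesis using le_round_threshold_iff[OF eps] by simp
  qed
  thus ?thesis by (fastforce simp: cell_def round_path_def not_le[symmetric])
qed

lemma near_grid_shift:
  assumes eps: "eps > 0" and x: "x \<in> grid d eps" and s: "s \<in> {-1, 0, 1}"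
  shows "near_grid d eps (nat \<lfloor>1/eps\<rfloor>) (shift d eps s x)"
  unfolding near_grid_def
proof (intro allI impI)
  fix i assume i: "i < d"
  obtain j where j: "j \<le> nat \<lfloor>1/eps\<rfloor>" "x i = real j * eps"
    using grid_coord_mem[OF x i eps] by auto
  have t: "s = real_of_int \<lfloor>s\<rfloor>" "-1 \<le> \<lfloor>s\<rfloor>" "\<lfloor>s\<rfloor> \<le> 1" using s by (auto simp: floor_minus)
  have "shift d eps s x i = real_of_int (int j + \<lfloor>s\<rfloor>) * eps"
    using i j(2) t(1) by (simp add: shift_coord algebra_simps)
  moreover have "int j \<le> int (nat \<lfloor>1/eps\<rfloor>)" using j(1) by (simp only: of_nat_le_iff)
  hence "-1 \<le> int j + \<lfloor>s\<rfloor>" "int j + \<lfloor>s\<rfloor> \<le> int (nat \<lfloor>1/eps\<rfloor>) + 1"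
    using t(2,3) by linarith+
  ultimately show "\<exists>m. -1 \<le> m \<and> m \<le> int (nat \<lfloor>1/eps\<rfloor>) + 1 \<and> shift d eps s x i = real_of_int m * eps"
    by blast
qed

lemma undamaged_in_round_path_iff:
  assumes eps: "eps > 0" and \<pi>: "valid_path d \<pi>" and x: "x \<in> grid d eps"
  shows "x \<in> undamaged_in d eps (cell (round_path eps (nat \<lfloor>1/eps\<rfloor>) \<pi>)) \<longleftrightarrow> x \<in> undamaged_in d eps (cell \<pi>)"
proof -
  note shifted = mem_cell_round_path_iff[OF eps \<pi> near_grid_shift[OF eps x]]
  from shifted[of 0] shifted[of 1] shifted[of "-1"] show ?thesis
    by (simp add: undamaged_in_def damaged_in_def)
qed

lemma round_path_without_coord: "round_path eps N (without_coord i \<pi>) = without_coord i (round_path eps N \<pi>)"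
  by (induction \<pi>) (auto simp: round_path_def without_coord_def)

lemma valid_path_without_coord: "valid_path d \<pi> \<Longrightarrow> valid_path d (without_coord i \<pi>)"
  by (auto simp: valid_path_def without_coord_def)

definition rounded_cuts :: "nat \<Rightarrow> real \<Rightarrow> nat \<Rightarrow> (nat \<times> real \<times> int) set" where
  "rounded_cuts d eps N = {..<d} \<times> (\<lambda>m. real_of_int m * eps) ` {-2..int N + 1} \<times> {-1, 1}"

lemma set_round_path_subset: "valid_path d \<pi> \<Longrightarrow> set (round_path eps N \<pi>) \<subseteq> rounded_cuts d eps N"
  by (auto simp: valid_path_def round_path_def rounded_cuts_def round_threshold_def)

lemma finite_rounded_cuts: "finite (rounded_cuts d eps N)"
  by (simp add: rounded_cuts_def)

lemma card_rounded_cuts_le: "card (rounded_cuts d eps N) \<le> 2 * d * (N + 4)"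
proof -
  have "card ((\<lambda>m. real_of_int m * eps) ` {-2..int N + 1}) \<le> N + 4"
    using card_image_le[of "{-2..int N + 1}" "\<lambda>m. real_of_int m * eps"] by simp
  thus ?thesis by (simp add: rounded_cuts_def card_cartesian_product)
qed

definition rounded_paths :: "nat \<Rightarrow> real \<Rightarrow> nat \<Rightarrow> nat \<Rightarrow> path set" where
  "rounded_paths d eps N l = {Q. set Q \<subseteq> rounded_cuts d eps N \<and> length Q \<le> l}"

lemma round_path_mem_rounded_paths:
  "valid_path d \<pi> \<Longrightarrow> length \<pi> \<le> l \<Longrightarrow> round_path eps N \<pi> \<in> rounded_paths d eps N l"
  using set_round_path_subset[of d \<pi> eps N] by (simp add: rounded_paths_def round_path_def)

lemma finite_rounded_paths: "finite (rounded_paths d eps N l)"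
  unfolding rounded_paths_def by (rule finite_lists_length_le[OF finite_rounded_cuts])

lemma card_rounded_paths_le: "0 < d \<Longrightarrow> card (rounded_paths d eps N l) \<le> (l + 1) * (2 * d * (N + 4)) ^ l"
  unfolding rounded_paths_def using card_rounded_cuts_le finite_rounded_cuts
  by (intro card_lists_length_le_bound) auto

lemma mem_dataset_shift:
  assumes "x \<in># dataset d eps k c"
  obtains j s where "j < k" "s \<in> {-1, 0, 1}" "x = shift d eps s (c j)"
proof -
  have "x \<in> set_mset (dataset d eps k c)" using assms by simp
  hence "\<exists>j<k. x = c j \<or> x = shift d eps 1 (c j) \<or> x = shift d eps (-1) (c j)"
    unfolding dataset_def by (subst (asm) set_mset_sum) (auto split: if_splits)
  thus ?thesis using that by (metis insertCI shift_zero)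
qed

lemma near_grid_dataset:
  assumes eps: "eps > 0" and c: "c \<in> PiE {..<k} (\<lambda>_. grid d eps)" and x: "x \<in># dataset d eps k c"
  shows "near_grid d eps (nat \<lfloor>1/eps\<rfloor>) x"
proof -
  obtain j s where "j < k" "s \<in> {-1, 0, 1}" "x = shift d eps s (c j)"
    using mem_dataset_shift[OF x] .
  with c show ?thesis using near_grid_shift[OF eps] by auto
qed

section \<open>Cuts through rich cells\<close>

lemma slice_damaged_if_between:
  fixes eps m w :: real
  assumes i: "i < d" and eps: "0 \<le> eps"
    and u: "u \<in> cell \<pi>" "u i \<le> (w - 1) * eps" and v: "v \<in> cell \<pi>" "(w + 1) * eps \<le> v i"
    and cut: "m * eps \<le> \<xi>" "\<xi> < (m + 1) * eps" "w = m \<or> w = m + 1"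
  shows "{j \<in> F_idx d eps k c (cell (without_coord i \<pi>)). c j i = w * eps}
           \<subseteq> {j \<in> F_idx d eps k c (cell \<pi>). damages d eps i \<xi> (c j)}"
proof
  fix j assume "j \<in> {j \<in> F_idx d eps k c (cell (without_coord i \<pi>)). c j i = w * eps}"
  hence j: "c j \<in> undamaged_in d eps (cell (without_coord i \<pi>))" "j < k" "c j i = w * eps"
    by (auto simp: F_idx_eq)
  have "c j \<in> undamaged_in d eps (cell \<pi>)"
    using u v j(3) eps by (intro undamaged_in_cell_if_between[OF j(1) i u(1) _ v(1)]) (auto simp: algebra_simps)
  moreover have "damages d eps i \<xi> (c j)" using damages_if_straddles[OF i cut(1,2)] j(3) cut(3) by auto
  ultimately show "j \<in> {j \<in> F_idx d eps k c (cell \<pi>). damages d eps i \<xi> (c j)}"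
    using j(2) by (simp add: F_idx_eq)
qed

lemma floor_divide_mult_bounds:
  fixes eps \<xi> :: real
  assumes "0 < eps"
  shows "real_of_int \<lfloor>\<xi>/eps\<rfloor> * eps \<le> \<xi>" "\<xi> < real_of_int (\<lfloor>\<xi>/eps\<rfloor> + 1) * eps"
proof -
  define m where "m = \<lfloor>\<xi>/eps\<rfloor>"
  have "real_of_int m \<le> \<xi>/eps" "\<xi>/eps < real_of_int (m + 1)" unfolding m_def by linarith+
  thus "real_of_int \<lfloor>\<xi>/eps\<rfloor> * eps \<le> \<xi>" "\<xi> < real_of_int (\<lfloor>\<xi>/eps\<rfloor> + 1) * eps"
    unfolding m_def[symmetric] using assms by (simp_all add: field_simps)
qed

text \<open>The value \<open>w\<close> is taken next to the cut, on the side of the undamaged center \<open>c f\<close>: then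
  the three points of every center in the slice lie between a data point and a shift of \<open>c f\<close>.\<close>

lemma damaged_slice_exists:
  assumes eps: "eps > 0" and c: "c \<in> PiE {..<k} (\<lambda>_. grid d eps)" and i: "i < d"
    and x: "x \<in># dataset d eps k c" "x \<in> cell \<pi>" "x i \<le> \<xi>"
    and y: "y \<in># dataset d eps k c" "y \<in> cell \<pi>" "\<xi> < y i"
    and f: "f \<in> F_idx d eps k c (cell \<pi>)"
  shows "\<exists>v \<le> nat \<lfloor>1/eps\<rfloor>. {j \<in> F_idx d eps k c (cell (without_coord i \<pi>)). c j i = real v * eps}
           \<subseteq> {j \<in> F_idx d eps k c (cell \<pi>). damages d eps i \<xi> (c j)}"
proof -
  define N where "N = nat \<lfloor>1/eps\<rfloor>"
  have scale: "real_of_int r * eps \<le> real_of_int r' * eps \<longleftrightarrow> r \<le> r'" for r r' using eps by simp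
  obtain a :: int where a: "-1 \<le> a" "x i = real_of_int a * eps"
    using near_grid_dataset[OF eps c x(1)] i unfolding near_grid_def by blast
  obtain b :: int where b: "b \<le> int N + 1" "y i = real_of_int b * eps"
    using near_grid_dataset[OF eps c y(1)] i unfolding near_grid_def N_def by blast
  have "f < k" and cf: "c f \<in> undamaged_in d eps (cell \<pi>)" using f by (auto simp: F_idx_eq)
  hence "c f \<in> grid d eps" using c by auto
  then obtain p where p: "p \<le> N" "c f i = real p * eps"
    using grid_coord_mem[OF _ i eps] unfolding N_def by auto
  have cf_up: "shift d eps 1 (c f) i = real_of_int (int p + 1) * eps"
    and cf_down: "shift d eps (-1) (c f) i = real_of_int (int p - 1) * eps"
    using p(2) by (simp_all add: shift_coord[OF i] algebra_simps)
  have cf_shifts: "shift d eps 1 (c f) \<in> cell \<pi>" "shift d eps (-1) (c f) \<in> cell \<pi>"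
    using cf by (auto simp: undamaged_in_def damaged_in_def)
  define m where "m = \<lfloor>\<xi>/eps\<rfloor>"
  have m: "real_of_int m * eps \<le> \<xi>" "\<xi> < real_of_int (m + 1) * eps"
    unfolding m_def using floor_divide_mult_bounds[OF eps] by auto
  have "real_of_int a * eps < real_of_int (m + 1) * eps" "real_of_int m * eps < real_of_int b * eps"
    using x(3) y(3) m a(2) b(2) by linarith+
  hence am: "a \<le> m" and mb: "m < b" using eps by simp_all
  define w where "w = (if m + 1 \<le> int p then m + 1 else m)"
  have w: "0 \<le> w" "w \<le> int N" using a(1) am mb b(1) p(1) unfolding w_def by auto
  obtain u v where u: "u \<in> cell \<pi>" "u i \<le> real_of_int (w - 1) * eps"
    and v: "v \<in> cell \<pi>" "real_of_int (w + 1) * eps \<le> v i"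
  proof (cases "m + 1 \<le> int p")
    case True
    hence "w = m + 1" by (simp add: w_def)
    hence "x i \<le> real_of_int (w - 1) * eps" "real_of_int (w + 1) * eps \<le> shift d eps 1 (c f) i"
      unfolding a(2) cf_up scale using True am by simp_all
    with x(2) cf_shifts(1) that show ?thesis by blast
  next
    case False
    hence "w = m" by (simp add: w_def)
    hence "shift d eps (-1) (c f) i \<le> real_of_int (w - 1) * eps" "real_of_int (w + 1) * eps \<le> y i"
      unfolding b(2) cf_down scale using False mb by simp_all
    with y(2) cf_shifts(2) that show ?thesis by blast
  qed
  have "{j \<in> F_idx d eps k c (cell (without_coord i \<pi>)). c j i = real_of_int w * eps}
      \<subseteq> {j \<in> F_idx d eps k c (cell \<pi>). damages d eps i \<xi> (c j)}"
    using u v m eps by (intro slice_damaged_if_between[OF i]) (auto simp: w_def)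
  moreover have "nat w \<le> N" "real (nat w) = real_of_int w" using w by (simp_all add: nat_le_iff)
  ultimately show ?thesis unfolding N_def[symmetric] by metis
qed

lemma cut_damages_many:
  fixes eps :: real
  assumes eps: "eps > 0" "eps * (real (nat \<lfloor>1/eps\<rfloor>) + 1) \<le> 11/10"
    and c: "c \<in> PiE {..<k} (\<lambda>_. grid d eps)" and i: "i < d"
    and x: "x \<in># dataset d eps k c" "x \<in> cell \<pi>" and y: "y \<in># dataset d eps k c" "y \<in> cell \<pi>"
    and cut: "separates i \<xi> x y"
    and F: "F_idx d eps k c (cell \<pi>) \<noteq> {}"
    and dense: "\<And>v. v \<le> nat \<lfloor>1/eps\<rfloor> \<Longrightarrow>
      11/20 * card (F_idx d eps k c (cell (without_coord i \<pi>))) / (real (nat \<lfloor>1/eps\<rfloor>) + 1)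
        \<le> card {j \<in> F_idx d eps k c (cell (without_coord i \<pi>)). c j i = real v * eps}"
  shows "eps * card (F_idx d eps k c (cell \<pi>)) / 2
           \<le> card {j \<in> F_idx d eps k c (cell \<pi>). damages d eps i \<xi> (c j)}"
proof -
  define N where "N = nat \<lfloor>1/eps\<rfloor>"
  define F where "F = F_idx d eps k c (cell \<pi>)"
  define T where "T = F_idx d eps k c (cell (without_coord i \<pi>))"
  obtain f where f: "f \<in> F" using F unfolding F_def by blast
  obtain v where v: "v \<le> N" and slice: "{j \<in> T. c j i = real v * eps} \<subseteq> {j \<in> F. damages d eps i \<xi> (c j)}"
  proof (cases "x i \<le> \<xi>")
    case True
    with cut have "\<xi> < y i" by (auto simp: separates_def)
    with True show ?thesis
      using damaged_slice_exists[OF eps(1) c i x _ y _ f[unfolded F_def]] that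
      unfolding N_def F_def T_def by blast
  next
    case False
    with cut have "y i \<le> \<xi>" by (auto simp: separates_def)
    with False show ?thesis
      using damaged_slice_exists[OF eps(1) c i y _ x _ f[unfolded F_def]] that
      unfolding N_def F_def T_def by (meson not_le)
  qed
  have "F \<subseteq> T" unfolding F_def T_def by (rule F_idx_mono[OF cell_subset_without_coord])
  hence "card F \<le> card T" by (intro card_mono) (simp_all add: T_def F_idx_def)
  have "eps * card F / 2 = eps * (real N + 1) * card F / (2 * (real N + 1))"
    by (simp add: field_simps add_pos_pos)
  also have "\<dots> \<le> 11/10 * card F / (2 * (real N + 1))"
    using eps(2)[folded N_def] by (intro divide_right_mono mult_right_mono) auto
  also have "\<dots> = 11/20 * card F / (real N + 1)" by simp
  also have "\<dots> \<le> 11/20 * card T / (real N + 1)"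
    using \<open>card F \<le> card T\<close> by (intro divide_right_mono mult_left_mono) auto
  also have "\<dots> \<le> card {j \<in> T. c j i = real v * eps}"
    using dense[OF v[unfolded N_def]] unfolding N_def T_def .
  also have "\<dots> \<le> card {j \<in> F. damages d eps i \<xi> (c j)}"
    using slice by (intro of_nat_mono card_mono) (simp_all add: F_def F_idx_def)
  finally show ?thesis unfolding F_def .
qed

definition thin_slice ::
    "nat \<Rightarrow> real \<Rightarrow> nat \<Rightarrow> real \<Rightarrow> (nat \<Rightarrow> nat \<Rightarrow> real) \<Rightarrow> path \<Rightarrow> nat \<Rightarrow> nat \<Rightarrow> bool" where
  "thin_slice d eps k s c \<pi> i v \<longleftrightarrow>
     s < real (card (F_idx d eps k c (cell (without_coord i \<pi>)))) \<and>
     card {j \<in> F_idx d eps k c (cell (without_coord i \<pi>)). c j i = real v * eps}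
       < 11/20 * card (F_idx d eps k c (cell (without_coord i \<pi>))) / (real (nat \<lfloor>1/eps\<rfloor>) + 1)"

lemma small_or_cuts_damage_many:
  fixes eps :: real
  assumes eps: "eps > 0" "eps * (real (nat \<lfloor>1/eps\<rfloor>) + 1) \<le> 11/10"
    and c: "c \<in> PiE {..<k} (\<lambda>_. grid d eps)"
    and no_thin: "\<And>i v. i < d \<Longrightarrow> v \<le> nat \<lfloor>1/eps\<rfloor> \<Longrightarrow> \<not> thin_slice d eps k (sqrt (real k)) c \<pi> i v"
  shows "real (card (F_idx d eps k c (cell \<pi>))) \<le> sqrt (real k)
          \<or> (\<forall>i < d. \<forall>\<xi>::real.
               (\<exists>x y. x \<in># dataset d eps k c \<and> y \<in># dataset d eps k c \<and>
                      x \<in> cell \<pi> \<and> y \<in> cell \<pi> \<and> separates i \<xi> x y)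
               \<longrightarrow> real (card {j \<in> F_idx d eps k c (cell \<pi>). damages d eps i \<xi> (c j)})
                     \<ge> eps * real (card (F_idx d eps k c (cell \<pi>))) / 2)"
proof (cases "real (card (F_idx d eps k c (cell \<pi>))) \<le> sqrt (real k)")
  case False
  hence big: "sqrt (real k) < card (F_idx d eps k c (cell \<pi>))" by simp
  hence F: "F_idx d eps k c (cell \<pi>) \<noteq> {}" by auto
  show ?thesis
  proof (rule disjI2, intro allI impI, elim exE conjE)
    fix i \<xi> x y assume i: "i < d" and xy: "x \<in># dataset d eps k c" "y \<in># dataset d eps k c"
      "x \<in> cell \<pi>" "y \<in> cell \<pi>" "separates i \<xi> x y"
    have "F_idx d eps k c (cell \<pi>) \<subseteq> F_idx d eps k c (cell (without_coord i \<pi>))"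
      by (rule F_idx_mono[OF cell_subset_without_coord])
    hence "card (F_idx d eps k c (cell \<pi>)) \<le> card (F_idx d eps k c (cell (without_coord i \<pi>)))"
      by (intro card_mono) (simp_all add: F_idx_def)
    with big have "sqrt (real k) < card (F_idx d eps k c (cell (without_coord i \<pi>)))" by linarith
    with no_thin[OF i] show "eps * real (card (F_idx d eps k c (cell \<pi>))) / 2
        \<le> real (card {j \<in> F_idx d eps k c (cell \<pi>). damages d eps i \<xi> (c j)})"
      by (intro cut_damages_many[OF eps c i xy(1,3,2,4,5) F]) (auto simp: thin_slice_def not_less)
  qed
qed simp

lemma F_idx_round_path:
  assumes eps: "eps > 0" and \<pi>: "valid_path d \<pi>" and c: "c \<in> PiE {..<k} (\<lambda>_. grid d eps)"
  shows "F_idx d eps k c (cell (round_path eps (nat \<lfloor>1/eps\<rfloor>) \<pi>)) = F_idx d eps k c (cell \<pi>)"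
  using undamaged_in_round_path_iff[OF eps \<pi>] c by (auto simp: F_idx_eq)

lemma thin_slice_round_path_iff:
  assumes eps: "eps > 0" and \<pi>: "valid_path d \<pi>" and c: "c \<in> PiE {..<k} (\<lambda>_. grid d eps)"
  shows "thin_slice d eps k s c (round_path eps (nat \<lfloor>1/eps\<rfloor>) \<pi>) i v \<longleftrightarrow> thin_slice d eps k s c \<pi> i v"
  using F_idx_round_path[OF eps valid_path_without_coord[OF \<pi>] c]
  by (simp add: thin_slice_def round_path_without_coord)

section \<open>The union bound\<close>

lemma card_thin_slice_le:
  fixes eps s :: real
  assumes eps: "eps > 0" and i: "i < d" and v: "v \<le> nat \<lfloor>1/eps\<rfloor>"
  shows "card {c \<in> PiE {..<k} (\<lambda>_. grid d eps). thin_slice d eps k s c \<pi> i v}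
           \<le> exp (- s / (10 * (real (nat \<lfloor>1/eps\<rfloor>) + 1))) * card (PiE {..<k} (\<lambda>_. grid d eps))"
proof -
  define N where "N = nat \<lfloor>1/eps\<rfloor>"
  define A where "A = undamaged_in d eps (cell (without_coord i \<pi>))"
  define B where "B = A \<inter> {x. x i = real v * eps}"
  have "card (grid d eps \<inter> A) = (N + 1) * card (grid d eps \<inter> B)"
    unfolding N_def A_def B_def Int_assoc[symmetric]
    by (rule card_grid_eq_mult_slice[OF eps i v undamaged_in_without_coord_fun_upd])
  hence q: "card (grid d eps \<inter> B) = 1 / (N + 1) * card (grid d eps \<inter> A)"
    by (simp add: field_simps)
  have "{c \<in> PiE {..<k} (\<lambda>_. grid d eps). thin_slice d eps k s c \<pi> i v}
      = {c \<in> PiE {..<k} (\<lambda>_. grid d eps). s < card {j\<in>{..<k}. c j \<in> A}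
           \<and> card {j\<in>{..<k}. c j \<in> B} < 11/20 * (1 / (N + 1)) * card {j\<in>{..<k}. c j \<in> A}}"
    by (simp add: thin_slice_def F_idx_eq A_def B_def N_def conj_assoc add.commute)
  also have "card \<dots> \<le> exp (- s * (1 / (N + 1)) / 10) * card (PiE {..<k} (\<lambda>_. grid d eps))"
    using q by (intro card_PiE_lower_tail_le) (auto simp: B_def finite_grid[OF eps])
  finally show ?thesis unfolding N_def by (simp add: field_simps)
qed

text \<open>The union bound runs over rounded paths only: a thin slice of a path is one of its
  rounding.\<close>

lemma prob_no_thin_slice:
  fixes eps s p :: real and k d l :: nat
  defines "N \<equiv> nat \<lfloor>1/eps\<rfloor>" and "S \<equiv> PiE {..<k} (\<lambda>_. grid d eps)"
  assumes eps: "eps > 0" and d: "0 < d"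
    and p: "real ((l + 1) * (2 * d * (N + 4)) ^ l * (d * (N + 1))) * exp (- s / (10 * (real N + 1))) \<le> p"
  shows "1 - p \<le> measure_pmf.prob (pmf_of_set S)
           {c \<in> S. \<forall>\<pi>. valid_path d \<pi> \<and> length \<pi> \<le> l \<longrightarrow> (\<forall>i<d. \<forall>v\<le>N. \<not> thin_slice d eps k s c \<pi> i v)}"
proof (rule prob_pmf_of_set_ge)
  define E where "E = rounded_paths d eps N l \<times> {..<d} \<times> {..N}"
  define U where "U = (\<Union>(Q, i, v)\<in>E. {c \<in> S. thin_slice d eps k s c Q i v})"
  have "(\<lambda>_. 0) \<in> grid d eps" by (auto simp: grid_def)
  thus "S \<noteq> {}" by (auto simp: S_def PiE_eq_empty_iff)
  show "finite S" unfolding S_def using finite_grid[OF eps] by (simp add: finite_PiE)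
  show "U \<subseteq> S" by (auto simp: U_def)
  show "S - U \<subseteq> {c \<in> S. \<forall>\<pi>. valid_path d \<pi> \<and> length \<pi> \<le> l \<longrightarrow> (\<forall>i<d. \<forall>v\<le>N. \<not> thin_slice d eps k s c \<pi> i v)}"
  proof (clarify)
    fix c \<pi> i v assume c: "c \<in> S" "c \<notin> U" and \<pi>: "valid_path d \<pi>" "length \<pi> \<le> l"
      and iv: "i < d" "v \<le> N" and thin: "thin_slice d eps k s c \<pi> i v"
    have "(round_path eps N \<pi>, i, v) \<in> E"
      using round_path_mem_rounded_paths[OF \<pi>] iv by (simp add: E_def)
    moreover have "thin_slice d eps k s c (round_path eps N \<pi>) i v"
      using thin thin_slice_round_path_iff[OF eps \<pi>(1)] c(1) unfolding N_def S_def by simp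
    ultimately show False using c unfolding U_def by blast
  qed
  have "card E = card (rounded_paths d eps N l) * (d * (N + 1))" by (simp add: E_def card_cartesian_product)
  also have "\<dots> \<le> (l + 1) * (2 * d * (N + 4)) ^ l * (d * (N + 1))"
    using card_rounded_paths_le[OF d] by (rule mult_le_mono1)
  finally have "real (card E) * exp (- s / (10 * (real N + 1))) \<le> p"
    using p by (meson exp_ge_zero mult_right_mono of_nat_mono order_trans)
  have "real (card U) \<le> card E * (exp (- s / (10 * (real N + 1))) * card S)"
    unfolding U_def
  proof (rule card_UN_le_mult)
    show "finite E" by (simp add: E_def finite_rounded_paths)
    fix e assume "e \<in> E"
    thus "real (card (case e of (Q, i, v) \<Rightarrow> {c \<in> S. thin_slice d eps k s c Q i v}))
        \<le> exp (- s / (10 * (real N + 1))) * card S"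
      using card_thin_slice_le[OF eps] by (auto simp: E_def S_def N_def)
  qed
  also have "\<dots> = (card E * exp (- s / (10 * (real N + 1)))) * card S" by simp
  also have "\<dots> \<le> p * card S"
    using \<open>real (card E) * exp (- s / (10 * (real N + 1))) \<le> p\<close> by (rule mult_right_mono) simp
  finally show "real (card U) \<le> p * card S" .
qed

section \<open>The parameters\<close>

lemma ln_gt_five:
  assumes "500 < k"
  shows "5 < ln (real k)"
proof -
  have "exp (5::real) = exp 1 ^ 5" by (simp add: exp_of_nat_mult[symmetric])
  also have "\<dots> \<le> 3 ^ 5" using exp_le by (intro power_mono) auto
  finally have "exp 5 < real k" using assms by simp
  hence "ln (exp 5) < ln (real k)" using assms by (subst ln_less_cancel_iff) auto
  thus ?thesis by simp
qed

lemma nat_floor_log2_quarter_le: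
  assumes "1 \<le> k"
  shows "real (nat \<lfloor>log 2 (real k) / 4\<rfloor>) \<le> 3/8 * ln (real k)"
proof -
  have "0 \<le> log 2 (real k) / 4" using assms by simp
  hence "real (nat \<lfloor>log 2 (real k) / 4\<rfloor>) \<le> log 2 (real k) / 4" by (rule of_nat_floor)
  also have "\<dots> = ln (real k) / (4 * ln 2)" by (simp add: log_def)
  also have "\<dots> \<le> ln (real k) / (4 * (2/3))"
    using assms ln2_ge_two_thirds by (intro divide_left_mono) auto
  finally show ?thesis by simp
qed

lemma power_mult_exp_le_inverse:
  assumes t: "5 < ln (real k)" and l: "real l \<le> 3/8 * ln (real k)" and x: "3 * (ln (real k))^2 \<le> x"
  shows "real k ^ (l + 2) * exp (- x) \<le> 1 / real k"
proof -
  define t where "t = ln (real k)"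
  have k: "0 < real k" using t by (cases "k = 0") auto
  have "real (l + 3) * t \<le> 3 * t * t" using l t unfolding t_def by (intro mult_right_mono) auto
  hence "real (l + 2) * t - x \<le> - t" using x unfolding t_def by (simp add: power2_eq_square algebra_simps)
  have "real k ^ (l + 2) = exp (real (l + 2) * t)"
    using k by (subst exp_of_nat_mult) (simp add: t_def)
  hence "real k ^ (l + 2) * exp (- x) = exp (real (l + 2) * t + - x)" by (simp add: mult_exp_exp)
  also have "\<dots> \<le> exp (- t)" using \<open>real (l + 2) * t - x \<le> - t\<close> by simp
  also have "\<dots> = 1 / real k" using k by (simp add: t_def exp_minus inverse_eq_divide)
  finally show ?thesis .
qed

lemma path_count_le_power:
  fixes k d N l :: nat
  assumes d: "real d \<le> sqrt (real k)" and N: "real N + 1 \<le> sqrt (real k) / 480"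
    and sk: "12500 \<le> sqrt (real k)" and l: "real (l + 1) \<le> real k"
  shows "real ((l + 1) * (2 * d * (N + 4)) ^ l * (d * (N + 1))) \<le> real k ^ (l + 2)"
proof -
  define B C where "B = 2 * d * (N + 4)" and "C = d * (N + 1)"
  have sq: "sqrt (real k) * sqrt (real k) = real k" by simp
  have "real B = real d * (2 * (real N + 4))" by (simp add: B_def)
  also have "\<dots> \<le> sqrt (real k) * sqrt (real k)" using d N sk by (intro mult_mono) auto
  finally have B: "real B \<le> real k" unfolding sq .
  have "real C = real d * (real N + 1)" by (simp add: C_def algebra_simps)
  also have "\<dots> \<le> sqrt (real k) * sqrt (real k)" using d N sk by (intro mult_mono) auto
  finally have C: "real C \<le> real k" unfolding sq .
  have "real ((l + 1) * B ^ l * C) = real (l + 1) * real B ^ l * real C"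
    by (simp only: of_nat_mult of_nat_power)
  also have "\<dots> \<le> real k * real k ^ l * real k" using l B C by (intro mult_mono power_mono) auto
  also have "\<dots> = real k ^ (l + 2)" by (simp add: power_add algebra_simps)
  finally show ?thesis unfolding B_def C_def .
qed

lemma union_bound_numeric:
  fixes k d N l :: nat
  assumes t: "5 < ln (real k)" and d: "real d \<le> sqrt (real k)"
    and N: "(ln (real k))^2 * (real N + 1) \<le> 13/500 * sqrt (real k)"
    and sk: "12500 \<le> sqrt (real k)" and l: "real l \<le> 3/8 * ln (real k)"
  shows "real ((l + 1) * (2 * d * (N + 4)) ^ l * (d * (N + 1))) * exp (- sqrt (real k) / (10 * (real N + 1)))
           \<le> 1 / real k"
proof -
  define t where "t = ln (real k)"
  have k: "0 < real k" using sk by (cases "k = 0") auto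
  have "5 * 5 \<le> t * t" using t unfolding t_def by (intro mult_mono) auto
  hence "25 * (real N + 1) \<le> t^2 * (real N + 1)" by (intro mult_right_mono) (auto simp: power2_eq_square)
  hence "25 * (real N + 1) \<le> 13/500 * sqrt (real k)" using N unfolding t_def by linarith
  hence "real N + 1 \<le> sqrt (real k) / 480" using sk by simp
  moreover have "real (l + 1) \<le> real k" using l t ln_less_self[OF k] unfolding t_def by simp
  ultimately have count: "real ((l + 1) * (2 * d * (N + 4)) ^ l * (d * (N + 1))) \<le> real k ^ (l + 2)"
    by (intro path_count_le_power[OF d _ sk])
  have "3 * t^2 * (10 * (real N + 1)) = 30 * (t^2 * (real N + 1))" by (simp add: algebra_simps)
  also have "\<dots> \<le> sqrt (real k)" using N sk unfolding t_def by linarith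
  finally have "3 * t^2 \<le> sqrt (real k) / (10 * (real N + 1))" by (simp add: field_simps)
  hence "real k ^ (l + 2) * exp (- (sqrt (real k) / (10 * (real N + 1)))) \<le> 1 / real k"
    using power_mult_exp_le_inverse[OF t l] unfolding t_def by blast
  moreover have "real ((l + 1) * (2 * d * (N + 4)) ^ l * (d * (N + 1))) * exp (- sqrt (real k) / (10 * (real N + 1)))
      \<le> real k ^ (l + 2) * exp (- (sqrt (real k) / (10 * (real N + 1))))"
    unfolding minus_divide_left[symmetric] by (rule mult_right_mono[OF count]) simp
  ultimately show ?thesis by linarith
qed

lemma cube_ln_lt_sqrt:
  fixes k :: nat and \<delta> :: real
  assumes k: "500 < k" and \<delta>: "(ln (real k))^3 / sqrt (real k) < \<delta>" "\<delta> < 1/100"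
  shows "0 < \<delta>" "100 * (ln (real k))^3 < sqrt (real k)"
proof -
  have sk: "0 < sqrt (real k)" using k by simp
  have "0 < (ln (real k))^3" using ln_gt_five[OF k] by simp
  moreover have "(ln (real k))^3 < \<delta> * sqrt (real k)" using \<delta>(1) sk by (simp add: field_simps)
  ultimately have "0 < \<delta> * sqrt (real k)" by linarith
  thus "0 < \<delta>" using sk by (simp add: zero_less_mult_iff)
  have "\<delta> * sqrt (real k) < 1/100 * sqrt (real k)" using \<delta>(2) sk by (rule mult_strict_right_mono)
  with \<open>(ln (real k))^3 < \<delta> * sqrt (real k)\<close> show "100 * (ln (real k))^3 < sqrt (real k)" by simp
qed

lemma parameter_bounds:
  fixes k :: nat and \<delta> :: real
  assumes k: "500 < k" and \<delta>: "(ln (real k))^3 / sqrt (real k) < \<delta>" "\<delta> < 1/100"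
  defines "eps \<equiv> 50 * \<delta> / real_of_int \<lceil>ln (real k)\<rceil>"
  shows "0 < eps" and "eps * (real (nat \<lfloor>1/eps\<rfloor>) + 1) \<le> 11/10"
    and "300 * real_of_int \<lceil>ln (real k)\<rceil> \<le> sqrt (real k)"
    and "(ln (real k))^2 * (real (nat \<lfloor>1/eps\<rfloor>) + 1) \<le> 13/500 * sqrt (real k)"
    and "12500 \<le> sqrt (real k)"
proof -
  define t K where "t = ln (real k)" and "K = real_of_int \<lceil>ln (real k)\<rceil>"
  have t: "5 < t" using ln_gt_five[OF k] by (simp add: t_def)
  have K: "t \<le> K" "K \<le> 6/5 * t" using t ceiling_correct[of t] unfolding t_def K_def by linarith+
  have sk: "0 < sqrt (real k)" using k by simp
  have \<delta>_pos: "0 < \<delta>" and cube: "100 * t^3 < sqrt (real k)"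
    using cube_ln_lt_sqrt[OF k \<delta>] unfolding t_def by auto
  have t\<delta>: "t^3 < \<delta> * sqrt (real k)" using \<delta>(1) sk unfolding t_def by (simp add: field_simps)
  have "5 * t^2 \<le> t * t^2" using t by (intro mult_right_mono) auto
  hence t3: "5 * t^2 \<le> t^3" by (simp add: power3_eq_cube power2_eq_square)
  have "5 * 5 \<le> t * t" using t by (intro mult_mono) auto
  hence t2: "25 \<le> t^2" by (simp add: power2_eq_square)
  have eps: "eps = 50 * \<delta> / K" unfolding eps_def K_def ..
  show eps_pos: "0 < eps" unfolding eps using \<delta>_pos K t by simp
  have "real (nat \<lfloor>1/eps\<rfloor>) \<le> 1/eps" using eps_pos by (intro of_nat_floor) simp
  hence N: "real (nat \<lfloor>1/eps\<rfloor>) + 1 \<le> 1/eps + 1" by simp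
  have "eps \<le> 1/10" unfolding eps using \<delta>(2) K t by (simp add: field_simps)
  moreover have "eps * (1/eps + 1) = 1 + eps" using eps_pos by (simp add: field_simps)
  ultimately show "eps * (real (nat \<lfloor>1/eps\<rfloor>) + 1) \<le> 11/10"
    using mult_left_mono[OF N, of eps] eps_pos by simp
  have "t^2 * K \<le> t^2 * (6/5 * t)" using K(2) by (intro mult_left_mono) auto
  hence "t^2 * K * 125 \<le> 3 * (50 * \<delta>) * sqrt (real k)"
    using t\<delta> by (simp add: power3_eq_cube power2_eq_square algebra_simps)
  hence "t^2 / eps \<le> 3/125 * sqrt (real k)"
    unfolding eps using \<delta>_pos K t by (simp add: field_simps)
  moreover have "t^2 * (real (nat \<lfloor>1/eps\<rfloor>) + 1) \<le> t^2 * (1/eps + 1)"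
    using N by (intro mult_left_mono) auto
  ultimately show "(ln (real k))^2 * (real (nat \<lfloor>1/eps\<rfloor>) + 1) \<le> 13/500 * sqrt (real k)"
    using cube t3 unfolding t_def by (simp add: algebra_simps)
  show "12500 \<le> sqrt (real k)" using cube t2 t3 by linarith
  have "25 * t \<le> t^2 * t" using t2 t by (intro mult_right_mono) auto
  thus "300 * real_of_int \<lceil>ln (real k)\<rceil> \<le> sqrt (real k)"
    using cube K unfolding K_def[symmetric] by (simp add: power3_eq_cube power2_eq_square)
qed

theorem lemma9:
  fixes k :: nat and \<delta> :: real and d :: nat and eps :: real
  assumes "k > 500"
    and "(ln (real k))^3 / sqrt (real k) < \<delta>" and "\<delta> < 1/100"
  defines "d \<equiv> 300 * nat \<lceil>ln (real k)\<rceil>"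
    and "eps \<equiv> 50 * \<delta> / real_of_int \<lceil>ln (real k)\<rceil>"
  shows "measure_pmf.prob (pmf_of_set (PiE {..<k} (\<lambda>_. grid d eps)))
      {c. \<forall>\<pi>. valid_path d \<pi> \<and> real (length \<pi>) \<le> log 2 (real k) / 4 \<longrightarrow>
            real (card (F_idx d eps k c (cell \<pi>))) \<le> sqrt (real k)
          \<or> (\<forall>i < d. \<forall>\<xi>::real.
               (\<exists>x y. x \<in># dataset d eps k c \<and> y \<in># dataset d eps k c \<and>
                      x \<in> cell \<pi> \<and> y \<in> cell \<pi> \<and> separates i \<xi> x y)
               \<longrightarrow> real (card {j \<in> F_idx d eps k c (cell \<pi>). damages d eps i \<xi> (c j)})
                     \<ge> eps * real (card (F_idx d eps k c (cell \<pi>))) / 2)}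
    \<ge> 1 - 1 / real k"
proof -
  define N l where "N = nat \<lfloor>1/eps\<rfloor>" and "l = nat \<lfloor>log 2 (real k) / 4\<rfloor>"
  define S where "S = PiE {..<k} (\<lambda>_. grid d eps)"
  define Good where "Good = {c \<in> S. \<forall>\<pi>. valid_path d \<pi> \<and> length \<pi> \<le> l \<longrightarrow>
    (\<forall>i<d. \<forall>v\<le>N. \<not> thin_slice d eps k (sqrt (real k)) c \<pi> i v)}"
  note params = parameter_bounds[OF assms(1-3), folded eps_def N_def]
  have t: "5 < ln (real k)" by (rule ln_gt_five[OF assms(1)])
  hence d: "0 < d" "real d \<le> sqrt (real k)" using params(3) by (simp_all add: d_def)
  have "real l \<le> 3/8 * ln (real k)" unfolding l_def using assms(1) by (intro nat_floor_log2_quarter_le) simp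
  note bound = union_bound_numeric[OF t d(2) params(4,5) this]
  have Good: "1 - 1 / real k \<le> measure_pmf.prob (pmf_of_set S) Good"
    unfolding Good_def S_def N_def by (rule prob_no_thin_slice[OF params(1) d(1) bound[unfolded N_def]])
  show ?thesis unfolding S_def[symmetric]
    by (rule order_trans[OF Good measure_pmf.finite_measure_mono],
        intro subsetI CollectI allI impI, elim conjE,
        rule small_or_cuts_damage_many[OF params(1) params(2)[unfolded N_def]])
      (auto simp: Good_def S_def N_def l_def le_nat_floor)
qed

end
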